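(* Let $n\ge27$, $\mathcal{X},\mathcal{Y}$ finite with $|\mathcal{X}|,|\mathcal{Y}|\ge2$, $\mathbf{X}$ a random vector on $\mathcal{X}^n$ and $\mathbf{Y}|\mathbf{X}\sim p^n_{Y|X}$. Let $U$ be a discrete random variable with $U,\mathbf{X},\mathbf{Y}$ a Markov chain in that order, let $u$ be in the support of $U$, and let $\mathcal{A}_u$ be the support of $\mathbf{X}$ given $U=u$. If $\log_2 g^n_{Y|X}(\mathcal{A}_u,1-\beta)\le c$ for some $c>0$ and $\beta\in(0,1)$, then $$\Pr\left(h_{\mathbf{Y}|U}(\mathbf{Y}|U)\le\mu+c\,\middle|\,U=u\right)\ge 1-2^{-\mu}-\beta$$ for each $\mu>0$.
   Context: $h_{\mathbf{Y}|U}(\mathbf{y}|u)=-\log_2 p_{\mathbf{Y}|U}(\mathbf{y}|u)$. For $\eta\in(0,1)$ and $\mathcal{A}\subseteq\mathcal{X}^n$, a set $\mathcal{B}\subseteq\mathcal{Y}^n$ is an $\eta$-image of $\mathcal{A}$ by $p_{Y|X}$ if $p^n_{Y|X}(\mathcal{B}|\mathbf{x})\ge\eta$ for all $\mathbf{x}\in\mathcal{A}$; $g^n_{Y|X}(\mathcal{A},\eta)$ is the minimum cardinality of such a set. *)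

theory Defs
  imports "HOL-Probability.Probability"
begin

fun chan_n :: "('x \<Rightarrow> 'y pmf) \<Rightarrow> 'x list \<Rightarrow> 'y list pmf" where
  "chan_n W [] = return_pmf []"
| "chan_n W (x # xs) = do { y \<leftarrow> W x; ys \<leftarrow> chan_n W xs; return_pmf (y # ys) }"

definition is_eta_image :: "('x \<Rightarrow> 'y pmf) \<Rightarrow> nat \<Rightarrow> 'x list set \<Rightarrow> real \<Rightarrow> 'y list set \<Rightarrow> bool" where
  "is_eta_image W n A eta B \<longleftrightarrow>
     B \<subseteq> {ys. length ys = n} \<and> (\<forall>x\<in>A. measure_pmf.prob (chan_n W x) B \<ge> eta)"

definition g_img :: "('x \<Rightarrow> 'y pmf) \<Rightarrow> nat \<Rightarrow> 'x list set \<Rightarrow> real \<Rightarrow> nat" where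
  "g_img W n A eta = (LEAST k. \<exists>B. is_eta_image W n A eta B \<and> finite B \<and> card B = k)"

text \<open>Joint law of (U, X, Y): (U,X) ~ PUX, and Y | X ~ p^n_{Y|X} (Markov chain U - X - Y).\<close>
definition joint :: "('u \<times> 'x list) pmf \<Rightarrow> ('x \<Rightarrow> 'y pmf) \<Rightarrow> ('u \<times> 'x list \<times> 'y list) pmf" where
  "joint PUX W = do { (u, xs) \<leftarrow> PUX; ys \<leftarrow> chan_n W xs; return_pmf (u, xs, ys) }"

definition prob_U :: "('u \<times> 'x list) pmf \<Rightarrow> ('x \<Rightarrow> 'y pmf) \<Rightarrow> 'u \<Rightarrow> real" where
  "prob_U PUX W u = measure_pmf.prob (joint PUX W) {t. fst t = u}"

definition p_YU :: "('u \<times> 'x list) pmf \<Rightarrow> ('x \<Rightarrow> 'y pmf) \<Rightarrow> 'y list \<Rightarrow> 'u \<Rightarrow> real" where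
  "p_YU PUX W ys u = measure_pmf.prob (joint PUX W) {t. fst t = u \<and> snd (snd t) = ys} / prob_U PUX W u"

definition h_YU :: "('u \<times> 'x list) pmf \<Rightarrow> ('x \<Rightarrow> 'y pmf) \<Rightarrow> 'y list \<Rightarrow> 'u \<Rightarrow> real" where
  "h_YU PUX W ys u = - log 2 (p_YU PUX W ys u)"

end

theory Submission
  imports Defs
begin

text \<open>
  Take a minimal (1 - \<beta>)-image B of the conditional support A_u, so that
  |B| \<le> 2^c, and split it into the outputs y with p_{Y|U}(y|u) \<ge> 2^{-\<mu>-c},
  where h_{Y|U}(y|u) \<le> \<mu> + c, and the remaining ones. Given U = u, the output
  lands in B with probability at least 1 - \<beta>, while the remaining outputs
  carry total conditional probability at most |B| 2^{-\<mu>-c} \<le> 2^{-\<mu>}.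
\<close>

lemma set_pmf_chan_n: "set_pmf (chan_n W xs) \<subseteq> {ys. length ys = length xs}"
  by (induction xs) auto

lemma prob_chan_n_length: "length xs = n \<Longrightarrow> measure_pmf.prob (chan_n W xs) {ys. length ys = n} = 1"
  using set_pmf_chan_n[of W xs] by (subst measure_pmf.prob_eq_1) (auto simp: AE_measure_pmf_iff)

lemma g_img_attained:
  fixes W :: "'x \<Rightarrow> 'y::finite pmf"
  assumes "\<eta> \<le> 1" and "\<forall>xs\<in>A. length xs = n"
  obtains B where "is_eta_image W n A \<eta> B" "finite B" "card B = g_img W n A \<eta>"
proof -
  have "is_eta_image W n A \<eta> {ys. length ys = n}"
    unfolding is_eta_image_def
  proof (intro conjI ballI)
    fix xs assume "xs \<in> A"
    then show "\<eta> \<le> measure_pmf.prob (chan_n W xs) {ys. length ys = n}"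
      using assms by (simp add: prob_chan_n_length)
  qed simp
  moreover have "finite {ys::'y list. length ys = n}"
    using finite_lists_length_eq[of "UNIV :: 'y set" n] by simp
  ultimately have "\<exists>k B. is_eta_image W n A \<eta> B \<and> finite B \<and> card B = k"
    by blast
  from LeastI_ex[OF this] show ?thesis
    using that unfolding g_img_def by blast
qed

lemma emeasure_joint_output:
  fixes PUX :: "('u \<times> 'x list) pmf" and W :: "'x \<Rightarrow> 'y pmf"
  shows "emeasure (measure_pmf (joint PUX W)) {t. fst t = u \<and> snd (snd t) \<in> S}
     = (\<integral>\<^sup>+ t. indicator {t. fst t = u} t * emeasure (measure_pmf (chan_n W (snd t))) S \<partial>measure_pmf PUX)"
proof -
  have "joint PUX W = bind_pmf PUX (\<lambda>t. map_pmf (\<lambda>ys. (fst t, snd t, ys)) (chan_n W (snd t)))"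
    unfolding joint_def map_pmf_def by (simp add: split_beta')
  moreover have "(\<lambda>ys. (fst t, snd t, ys)) -` {t. fst t = u \<and> snd (snd t) \<in> S}
      = (if fst t = u then S else {})" for t :: "'u \<times> 'x list"
    by auto
  ultimately show ?thesis
    by (auto intro!: nn_integral_cong split: split_indicator)
qed

lemma prob_U_eq_marginal: "prob_U PUX W u = measure_pmf.prob PUX {t. fst t = u}"
proof -
  have "emeasure (measure_pmf (joint PUX W)) {t. fst t = u \<and> snd (snd t) \<in> UNIV}
      = emeasure (measure_pmf PUX) {t. fst t = u}"
    unfolding emeasure_joint_output by (simp add: measure_pmf.emeasure_space_1)
  then show ?thesis
    unfolding prob_U_def by (simp add: measure_pmf.emeasure_eq_measure)
qed

lemma prob_U_pos: "u \<in> fst ` set_pmf PUX \<Longrightarrow> 0 < prob_U PUX W u"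
  unfolding prob_U_eq_marginal by (auto intro: measure_pmf_posI)

lemma prob_joint_output_ge:
  assumes "0 \<le> \<eta>"
    and "\<And>xs. (u, xs) \<in> set_pmf PUX \<Longrightarrow> \<eta> \<le> measure_pmf.prob (chan_n W xs) B"
  shows "\<eta> * prob_U PUX W u \<le> measure_pmf.prob (joint PUX W) {t. fst t = u \<and> snd (snd t) \<in> B}"
proof -
  have "ennreal (\<eta> * prob_U PUX W u) = ennreal \<eta> * emeasure (measure_pmf PUX) {t. fst t = u}"
    using assms(1) by (simp add: prob_U_eq_marginal measure_pmf.emeasure_eq_measure ennreal_mult)
  also have "\<dots> = (\<integral>\<^sup>+ t. ennreal \<eta> * indicator {t. fst t = u} t \<partial>measure_pmf PUX)"
    by (rule nn_integral_cmult_indicator[symmetric]) simp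
  also have "\<dots> \<le> (\<integral>\<^sup>+ t. indicator {t. fst t = u} t * emeasure (measure_pmf (chan_n W (snd t))) B \<partial>measure_pmf PUX)"
    using assms(2)
    by (intro nn_integral_mono_AE)
       (auto simp: AE_measure_pmf_iff measure_pmf.emeasure_eq_measure split: split_indicator)
  also have "\<dots> = emeasure (measure_pmf (joint PUX W)) {t. fst t = u \<and> snd (snd t) \<in> B}"
    by (rule emeasure_joint_output[symmetric])
  finally show ?thesis
    by (simp add: measure_pmf.emeasure_eq_measure)
qed

lemma prob_joint_output_le:
  fixes r :: real
  assumes "finite G" and "\<And>y. y \<in> G \<Longrightarrow> p_YU PUX W y u \<le> r" and "0 < prob_U PUX W u"
  shows "measure_pmf.prob (joint PUX W) {t. fst t = u \<and> snd (snd t) \<in> G}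
           \<le> card G * r * prob_U PUX W u"
proof -
  have fibres: "{t. fst t = u \<and> snd (snd t) \<in> G} = (\<Union>y\<in>G. {t. fst t = u \<and> snd (snd t) = y})"
    by auto
  have "measure_pmf.prob (joint PUX W) {t. fst t = u \<and> snd (snd t) \<in> G}
      = (\<Sum>y\<in>G. measure_pmf.prob (joint PUX W) {t. fst t = u \<and> snd (snd t) = y})"
    unfolding fibres
    by (rule measure_pmf.finite_measure_finite_Union[OF assms(1)]) (auto simp: disjoint_family_on_def)
  also have "\<dots> = (\<Sum>y\<in>G. p_YU PUX W y u * prob_U PUX W u)"
    using assms(3) unfolding p_YU_def by simp
  also have "\<dots> \<le> (\<Sum>y\<in>G. r * prob_U PUX W u)"
    using assms(2,3) by (intro sum_mono) simp
  finally show ?thesis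
    by simp
qed

lemma h_YU_le_of_p_YU_ge:
  assumes "2 powr (- s) \<le> p_YU PUX W ys u"
  shows "h_YU PUX W ys u \<le> s"
proof -
  have "0 < p_YU PUX W ys u"
    using assms by (rule less_le_trans[rotated]) simp
  then have "- s \<le> log 2 (p_YU PUX W ys u)"
    using assms by (simp add: le_log_iff)
  then show ?thesis
    unfolding h_YU_def by simp
qed

lemma prob_joint_h_YU_le_ge:
  fixes PUX :: "('u \<times> 'x list) pmf" and W :: "'x \<Rightarrow> 'y pmf"
  assumes "finite B" and "0 < prob_U PUX W u"
  shows "measure_pmf.prob (joint PUX W) {t. fst t = u \<and> snd (snd t) \<in> B}
           - card B * 2 powr (- s) * prob_U PUX W u
         \<le> measure_pmf.prob (joint PUX W) {t. fst t = u \<and> h_YU PUX W (snd (snd t)) u \<le> s}"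
proof -
  let ?P = "measure_pmf.prob (joint PUX W)"
  define G where "G = {y \<in> B. p_YU PUX W y u < 2 powr (- s)}"
  define E :: "('u \<times> 'x list \<times> 'y list) set"
    where "E = {t. fst t = u \<and> h_YU PUX W (snd (snd t)) u \<le> s}"
  have "{t. fst t = u \<and> snd (snd t) \<in> B} \<subseteq> E \<union> {t. fst t = u \<and> snd (snd t) \<in> G}"
    unfolding E_def G_def by (auto intro: h_YU_le_of_p_YU_ge simp: not_less)
  then have "?P {t. fst t = u \<and> snd (snd t) \<in> B} \<le> ?P (E \<union> {t. fst t = u \<and> snd (snd t) \<in> G})"
    by (rule measure_pmf.finite_measure_mono) simp
  also have "\<dots> \<le> ?P E + ?P {t. fst t = u \<and> snd (snd t) \<in> G}"
    by (rule measure_Un_le) simp_all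
  also have "\<dots> \<le> ?P E + card G * 2 powr (- s) * prob_U PUX W u"
    using assms by (intro add_left_mono prob_joint_output_le) (auto simp: G_def)
  also have "\<dots> \<le> ?P E + card B * 2 powr (- s) * prob_U PUX W u"
    using assms by (intro add_left_mono mult_right_mono) (auto simp: G_def intro: card_mono)
  finally show ?thesis
    unfolding E_def by simp
qed

theorem lemma25:
  fixes W :: "'x::finite \<Rightarrow> 'y::finite pmf"
    and PUX :: "('u \<times> 'x list) pmf"
    and n :: nat and u :: 'u and c \<beta> :: real
  assumes "n \<ge> 27"
    and "CARD('x) \<ge> 2" and "CARD('y) \<ge> 2"
    and "\<forall>t \<in> set_pmf PUX. length (snd t) = n"
    and "u \<in> fst ` set_pmf PUX"
    and "c > 0" and "0 < \<beta>" and "\<beta> < 1"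
    and "log 2 (real (g_img W n {xs. (u, xs) \<in> set_pmf PUX} (1 - \<beta>))) \<le> c"
  shows "\<forall>\<mu>>0. measure_pmf.prob (joint PUX W)
                 {t. fst t = u \<and> h_YU PUX W (snd (snd t)) u \<le> \<mu> + c} / prob_U PUX W u
               \<ge> 1 - 2 powr (-\<mu>) - \<beta>"
proof (intro allI impI)
  fix \<mu> :: real
  let ?P = "measure_pmf.prob (joint PUX W)"
  have P_u: "0 < prob_U PUX W u"
    using assms(5) by (rule prob_U_pos)
  have A_len: "\<forall>xs\<in>{xs. (u, xs) \<in> set_pmf PUX}. length xs = n"
    using assms(4) by force
  have "1 - \<beta> \<le> 1"
    using assms(7) by simp
  then obtain B where B: "is_eta_image W n {xs. (u, xs) \<in> set_pmf PUX} (1 - \<beta>) B" "finite B"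
      "card B = g_img W n {xs. (u, xs) \<in> set_pmf PUX} (1 - \<beta>)"
    using A_len by (rule g_img_attained)
  have "real (card B) \<le> 2 powr c"
    using assms(9) B(3) by (cases "card B = 0") (simp_all add: log_le_iff)
  then have "card B * 2 powr (- (\<mu> + c)) \<le> 2 powr (- \<mu>)"
    using mult_right_mono[of "card B" "2 powr c" "2 powr (- (\<mu> + c))"]
    by (simp add: powr_add[symmetric])
  moreover have "(1 - \<beta>) * prob_U PUX W u \<le> ?P {t. fst t = u \<and> snd (snd t) \<in> B}"
    using assms(8) B(1) by (intro prob_joint_output_ge) (auto simp: is_eta_image_def)
  ultimately have "(1 - \<beta>) * prob_U PUX W u - 2 powr (- \<mu>) * prob_U PUX W u
      \<le> ?P {t. fst t = u \<and> snd (snd t) \<in> B} - card B * 2 powr (- (\<mu> + c)) * prob_U PUX W u"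
    using P_u by (intro diff_mono mult_right_mono) auto
  also have "\<dots> \<le> ?P {t. fst t = u \<and> h_YU PUX W (snd (snd t)) u \<le> \<mu> + c}"
    using B(2) P_u by (rule prob_joint_h_YU_le_ge)
  finally have "(1 - 2 powr (- \<mu>) - \<beta>) * prob_U PUX W u
      \<le> ?P {t. fst t = u \<and> h_YU PUX W (snd (snd t)) u \<le> \<mu> + c}"
    by (simp add: algebra_simps)
  then show "1 - 2 powr (- \<mu>) - \<beta>
      \<le> ?P {t. fst t = u \<and> h_YU PUX W (snd (snd t)) u \<le> \<mu> + c} / prob_U PUX W u"
    using P_u by (simp add: pos_le_divide_eq)
qed

end
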